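(* Let $n\ge 2$ be an integer and $A\subseteq L_n$. (i) If $B\subseteq L_n\setminus A$ has cardinality continuum, then $B$ is not $z$-embedded in $(X_n,\tau(A))$. (ii) If $B\subseteq L_n\setminus A$ is a closed uncountable subset of $(L_n,\tau_E|_{L_n})$, then $L_n$ is not $z$-embedded in $(X_n,\tau(A))$.
   Context: For $\overline{x},\overline{a}\in\mathbb R^n$ let $|\overline{x}-\overline{a}|$ be the Euclidean distance and $B(\overline{a},\epsilon)=\{\overline{x}\in\mathbb R^n:|\overline{x}-\overline{a}|<\epsilon\}$. Let $P_n=\{\overline{x}\in\mathbb R^n: x_n>0\}$, $L_n=\{\overline{x}\in\mathbb R^n: x_n=0\}$, $X_n=P_n\cup L_n$, and let $\tau_E$ denote the Euclidean topology on $X_n$. For $\overline{a}\in L_n$ and $\epsilon>0$ put $\overline{a(\epsilon)}=(a_1,\dots,a_{n-1},\epsilon)$ and $\tilde B(\overline{a},\epsilon)=\{\overline{a}\}\cup B(\overline{a(\epsilon)},\epsilon)$. For $A\subseteq L_n$, the topology $\tau(A)$ on $X_n$ is generated by the local bases: at $\overline{a}\in P_n$, the sets $B(\overline{a},\epsilon)$ with $0<\epsilon<a_n$; at $\overline{a}\in A$, the sets $B(\overline{a},\epsilon)\cap X_n$ with $\epsilon>0$; at $\overline{a}\in L_n\setminus A$, the sets $\tilde B(\overline{a},\epsilon)$ with $\epsilon>0$. A subset $Y$ of a space $X$ is $z$-embedded in $X$ if every zero set of $Y$ is the trace on $Y$ of some zero set of $X$. *)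

theory Defs
  imports "HOL-Analysis.Analysis"
begin

text \<open>We model R^n as R^(n-1) x R, i.e. points are pairs (y, t) with y :: real^'m and
  t the last coordinate x_n; n = CARD('m) + 1, so n >= 2 automatically and every n >= 2 arises.
  The product norm on real^'m x real is the Euclidean norm on R^n.\<close>

definition Pn :: "((real^'m) \<times> real) set" where
  "Pn = {x. snd x > 0}"

definition Ln :: "((real^'m) \<times> real) set" where
  "Ln = {x. snd x = 0}"

definition Xn :: "((real^'m) \<times> real) set" where
  "Xn = Pn \<union> Ln"

definition tilde_ball :: "(real^'m) \<times> real \<Rightarrow> real \<Rightarrow> ((real^'m) \<times> real) set" where
  "tilde_ball a e = insert a (ball (fst a, e) e)"

definition basic_nbhd :: "((real^'m) \<times> real) set \<Rightarrow> (real^'m) \<times> real \<Rightarrow> ((real^'m) \<times> real) set \<Rightarrow> bool" where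
  "basic_nbhd A p V \<longleftrightarrow>
     (p \<in> Pn \<and> (\<exists>e. 0 < e \<and> e < snd p \<and> V = ball p e)) \<or>
     (p \<in> A \<and> (\<exists>e>0. V = ball p e \<inter> Xn)) \<or>
     (p \<in> Ln - A \<and> (\<exists>e>0. V = tilde_ball p e))"

definition tauA :: "((real^'m) \<times> real) set \<Rightarrow> ((real^'m) \<times> real) topology" where
  "tauA A = topology (\<lambda>U. U \<subseteq> Xn \<and> (\<forall>p\<in>U. \<exists>V. basic_nbhd A p V \<and> V \<subseteq> U))"

definition zero_set_of :: "'a topology \<Rightarrow> 'a set \<Rightarrow> bool" where
  "zero_set_of X Z \<longleftrightarrow> (\<exists>f. continuous_map X euclideanreal f \<and> Z = {x \<in> topspace X. f x = 0})"

definition z_embedded :: "'a set \<Rightarrow> 'a topology \<Rightarrow> bool" where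
  "z_embedded Y X \<longleftrightarrow>
     (\<forall>Z. zero_set_of (subtopology X Y) Z \<longrightarrow> (\<exists>Z'. zero_set_of X Z' \<and> Z = Z' \<inter> Y))"

end

theory Submission
  imports Defs
begin

(* Every nonempty tau(A)-open set contains a Euclidean ball, so (X_n, tau(A)) is separable: a
   continuous real function on it is determined by its values on a countable dense set, and
   X_n has at most c = |R^N| zero sets. On the other hand, the points of L_n - A are isolated
   in L_n, while near the points of A the subspace L_n carries the Euclidean topology. Hence
   for B as in (i) every subset of B is a zero set of the discrete space B, and for B as in (ii)
   every subset S of B is a zero set of L_n (the indicator of L_n - S is continuous because the
   closure of S misses A). If B, resp. L_n, were z-embedded, the 2^|B| subsets of B would be
   traces of distinct zero sets of X_n, which is impossible as |B| >= c; in (ii) this bound holds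
   because the condensation points of a closed uncountable set form a nonempty perfect set. *)

lemma ball_above_subset_Pn: "ball (y, e) e \<subseteq> Pn"
proof
  fix q assume "q \<in> ball (y, e) e"
  hence "dist e (snd q) < e" using dist_snd_le[of "(y, e)" q] by simp
  thus "q \<in> Pn" by (simp add: Pn_def dist_real_def)
qed

lemma ball_above_mono: "e \<le> e' \<Longrightarrow> ball (y, e) e \<subseteq> ball (y, e') e'"
proof
  fix q assume "e \<le> e'" "q \<in> ball (y, e) e"
  have "dist (y, e') q \<le> dist (y, e') (y, e) + dist (y, e) q" by (rule dist_triangle)
  also have "dist (y, e') (y, e) = e' - e"
    using \<open>e \<le> e'\<close> by (simp add: dist_Pair_Pair dist_real_def)
  finally show "q \<in> ball (y, e') e'" using \<open>q \<in> ball (y, e) e\<close> by simp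
qed

lemma ball_above_subset_ball:
  assumes "p \<in> Ln" shows "ball (fst p, e) e \<subseteq> ball p (2 * e)"
proof
  fix q assume q: "q \<in> ball (fst p, e) e"
  hence "0 < e" by (metis mem_ball zero_le_dist le_less_trans)
  have "dist p q \<le> dist p (fst p, e) + dist (fst p, e) q" by (rule dist_triangle)
  also have "dist p (fst p, e) = e"
    using assms \<open>0 < e\<close> by (cases p) (simp add: Ln_def dist_Pair_Pair dist_real_def)
  finally show "q \<in> ball p (2 * e)" using q by simp
qed

lemma ball_subset_Pn: "p \<in> Pn \<Longrightarrow> e \<le> snd p \<Longrightarrow> ball p e \<subseteq> Pn"
proof
  fix q assume "p \<in> Pn" "e \<le> snd p" "q \<in> ball p e"
  hence "dist (snd p) (snd q) < e" using dist_snd_le[of p q] by simp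
  thus "q \<in> Pn" using \<open>e \<le> snd p\<close> by (auto simp: Pn_def dist_real_def)
qed

lemma tilde_ball_mono: "e \<le> e' \<Longrightarrow> tilde_ball p e \<subseteq> tilde_ball p e'"
  unfolding tilde_ball_def using ball_above_mono by blast

lemma tilde_ball_subset: "p \<in> Ln \<Longrightarrow> 0 < e \<Longrightarrow> tilde_ball p e \<subseteq> ball p (2 * e) \<inter> Xn"
  unfolding tilde_ball_def Xn_def using ball_above_subset_Pn ball_above_subset_ball by fastforce

lemma tilde_ball_Int_Ln: "p \<in> Ln \<Longrightarrow> tilde_ball p e \<inter> Ln = {p}"
  unfolding tilde_ball_def using ball_above_subset_Pn by (fastforce simp: Pn_def Ln_def)

lemma basic_nbhd_ballI: "p \<in> Pn \<Longrightarrow> 0 < e \<Longrightarrow> e < snd p \<Longrightarrow> basic_nbhd A p (ball p e)"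
  unfolding basic_nbhd_def by blast

lemma basic_nbhd_ball_XnI: "p \<in> A \<Longrightarrow> 0 < e \<Longrightarrow> basic_nbhd A p (ball p e \<inter> Xn)"
  unfolding basic_nbhd_def by blast

lemma basic_nbhd_tilde_ballI: "p \<in> Ln - A \<Longrightarrow> 0 < e \<Longrightarrow> basic_nbhd A p (tilde_ball p e)"
  unfolding basic_nbhd_def by blast

lemma basic_nbhd_chain:
  assumes "A \<subseteq> Ln" "basic_nbhd A p V" "basic_nbhd A p W"
  shows "V \<subseteq> W \<or> W \<subseteq> V"
proof -
  define N where "N e = (if p \<in> Pn then ball p e else if p \<in> A then ball p e \<inter> Xn
                         else tilde_ball p e)" for e
  have "mono N"
    unfolding N_def by (intro monoI) (auto dest: tilde_ball_mono simp: subset_eq)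
  moreover have "\<exists>e. U = N e" if "basic_nbhd A p U" for U
  proof -
    have "p \<notin> Pn" if "p \<in> Ln" using that by (simp add: Pn_def Ln_def)
    thus ?thesis using \<open>basic_nbhd A p U\<close> assms(1) unfolding basic_nbhd_def N_def by auto
  qed
  ultimately show ?thesis using assms(2,3) by (metis le_cases monoD)
qed

lemma openin_tauA:
  assumes "A \<subseteq> Ln"
  shows "openin (tauA A) U \<longleftrightarrow> U \<subseteq> Xn \<and> (\<forall>p\<in>U. \<exists>V. basic_nbhd A p V \<and> V \<subseteq> U)"
proof -
  let ?L = "\<lambda>U. U \<subseteq> Xn \<and> (\<forall>p\<in>U. \<exists>V. basic_nbhd A p V \<and> V \<subseteq> U)"
  have "?L (S \<inter> T)" if S: "?L S" and T: "?L T" for S T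
  proof (intro conjI ballI)
    show "S \<inter> T \<subseteq> Xn" using S by blast
    fix p assume p: "p \<in> S \<inter> T"
    obtain V where V: "basic_nbhd A p V" "V \<subseteq> S" using S p by blast
    obtain W where W: "basic_nbhd A p W" "W \<subseteq> T" using T p by blast
    show "\<exists>V. basic_nbhd A p V \<and> V \<subseteq> S \<inter> T"
      using basic_nbhd_chain[OF assms V(1) W(1)] V W by blast
  qed
  moreover have "?L (\<Union>K)" if K: "\<forall>S\<in>K. ?L S" for K
  proof (intro conjI ballI)
    show "\<Union>K \<subseteq> Xn" using K by blast
    fix p assume "p \<in> \<Union>K"
    then obtain S where "S \<in> K" "p \<in> S" by blast
    then obtain V where "basic_nbhd A p V" "V \<subseteq> S" using K by blast
    thus "\<exists>V. basic_nbhd A p V \<and> V \<subseteq> \<Union>K" using \<open>S \<in> K\<close> by blast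
  qed
  ultimately have "istopology ?L" unfolding istopology_def by blast
  thus ?thesis unfolding tauA_def by simp
qed

lemma basic_nbhd_in_ball:
  assumes "q \<in> Xn" "0 < r"
  shows "\<exists>V. basic_nbhd A q V \<and> V \<subseteq> ball q r \<inter> Xn"
proof -
  consider "q \<in> Pn" | "q \<in> A" | "q \<in> Ln - A" using assms(1) by (auto simp: Xn_def)
  thus ?thesis
  proof cases
    case 1
    define e where "e = min r (snd q / 2)"
    have e: "0 < e" "e < snd q" using 1 assms(2) by (auto simp: e_def Pn_def)
    have "ball q e \<subseteq> Pn" using ball_subset_Pn[OF 1] e(2) by simp
    hence "ball q e \<subseteq> ball q r \<inter> Xn" by (auto simp: e_def Xn_def)
    moreover have "basic_nbhd A q (ball q e)" using basic_nbhd_ballI[OF 1 e] .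
    ultimately show ?thesis by blast
  next
    case 2
    thus ?thesis using basic_nbhd_ball_XnI[OF 2 assms(2)] by blast
  next
    case 3
    have "0 < r / 2" using assms(2) by simp
    hence "basic_nbhd A q (tilde_ball q (r / 2))" using basic_nbhd_tilde_ballI[OF 3] by blast
    moreover have "tilde_ball q (r / 2) \<subseteq> ball q r \<inter> Xn"
      using tilde_ball_subset[of q "r / 2"] 3 \<open>0 < r / 2\<close> by simp
    ultimately show ?thesis by blast
  qed
qed

lemma topspace_tauA:
  assumes "A \<subseteq> Ln" shows "topspace (tauA A) = Xn"
proof -
  have "openin (tauA A) Xn"
    unfolding openin_tauA[OF assms] using basic_nbhd_in_ball[OF _ zero_less_one, of _ A] by blast
  thus ?thesis using openin_subset openin_tauA[OF assms, of "topspace (tauA A)"] by blast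
qed

lemma openin_tauA_open_Int:
  assumes "A \<subseteq> Ln" "open W" shows "openin (tauA A) (W \<inter> Xn)"
  unfolding openin_tauA[OF assms(1)]
proof (intro conjI ballI)
  fix q assume q: "q \<in> W \<inter> Xn"
  then obtain r where "0 < r" "ball q r \<subseteq> W" using assms(2) open_contains_ball by blast
  thus "\<exists>V. basic_nbhd A q V \<and> V \<subseteq> W \<inter> Xn" using basic_nbhd_in_ball[of q r A] q by blast
qed blast

lemma openin_tilde_ball:
  assumes "A \<subseteq> Ln" "p \<in> Ln - A" "0 < e" shows "openin (tauA A) (tilde_ball p e)"
  unfolding openin_tauA[OF assms(1)]
proof (intro conjI ballI)
  show "tilde_ball p e \<subseteq> Xn" using tilde_ball_subset assms(2,3) by blast
  fix q assume q: "q \<in> tilde_ball p e"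
  show "\<exists>V. basic_nbhd A q V \<and> V \<subseteq> tilde_ball p e"
  proof (cases "q = p")
    case True
    thus ?thesis using basic_nbhd_tilde_ballI[OF assms(2,3)] by blast
  next
    case False
    have "openin (tauA A) (ball (fst p, e) e \<inter> Xn)"
      by (rule openin_tauA_open_Int[OF assms(1)]) simp
    moreover have "q \<in> ball (fst p, e) e \<inter> Xn" "ball (fst p, e) e \<inter> Xn \<subseteq> tilde_ball p e"
      using q False \<open>tilde_ball p e \<subseteq> Xn\<close> by (auto simp: tilde_ball_def)
    ultimately show ?thesis unfolding openin_tauA[OF assms(1)] by blast
  qed
qed

lemma basic_nbhd_contains_ball:
  assumes "A \<subseteq> Ln" "basic_nbhd A p V" shows "\<exists>c r. 0 < r \<and> ball c r \<subseteq> V"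
proof -
  consider e where "0 < e" "V = ball p e"
    | e where "p \<in> A" "0 < e" "V = ball p e \<inter> Xn"
    | e where "p \<in> Ln" "0 < e" "V = tilde_ball p e"
    using assms(2) unfolding basic_nbhd_def by blast
  thus ?thesis
  proof cases
    case (2 e)
    hence "ball (fst p, e / 2) (e / 2) \<subseteq> V"
      using ball_above_subset_ball[of p "e / 2"] ball_above_subset_Pn assms(1)
      by (auto simp: Xn_def)
    thus ?thesis using \<open>0 < e\<close> half_gt_zero by blast
  next
    case (3 e)
    thus ?thesis by (auto simp: tilde_ball_def)
  qed blast
qed

lemma separable_space_tauA:
  fixes A :: "((real^'m) \<times> real) set"
  assumes "A \<subseteq> Ln" shows "separable_space (tauA A)"
proof -
  obtain D :: "((real^'m) \<times> real) set"
    where "countable D" and D: "\<And>W. open W \<Longrightarrow> W \<noteq> {} \<Longrightarrow> \<exists>d\<in>D. d \<in> W"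
    by (rule countable_dense_setE) blast
  have "D \<inter> Xn \<inter> T \<noteq> {}" if T: "openin (tauA A) T" "T \<noteq> {}" for T
  proof -
    obtain p V where V: "basic_nbhd A p V" "V \<subseteq> T" and "T \<subseteq> Xn"
      using T unfolding openin_tauA[OF assms] by blast
    obtain c r where "0 < r" "ball c r \<subseteq> V" using basic_nbhd_contains_ball[OF assms V(1)] by blast
    moreover obtain d where "d \<in> D" "d \<in> ball c r" using D[of "ball c r"] \<open>0 < r\<close> by auto
    ultimately show ?thesis using V(2) \<open>T \<subseteq> Xn\<close> by blast
  qed
  hence "tauA A closure_of (D \<inter> Xn) = topspace (tauA A)"
    unfolding dense_intersects_open by blast
  moreover have "countable (D \<inter> Xn)" "D \<inter> Xn \<subseteq> topspace (tauA A)"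
    using \<open>countable D\<close> topspace_tauA[OF assms] by auto
  ultimately show ?thesis unfolding separable_space_def by blast
qed

lemma topspace_subtopology_Ln_tauA:
  assumes "A \<subseteq> Ln" shows "topspace (subtopology (tauA A) Ln) = Ln"
  using topspace_tauA[OF assms] by (auto simp: Xn_def)

lemma openin_subtopology_Ln_tauA:
  assumes "A \<subseteq> Ln" "W \<subseteq> Ln - A" shows "openin (subtopology (tauA A) Ln) W"
  unfolding openin_subopen[of _ W]
proof
  fix p assume "p \<in> W"
  hence "p \<in> Ln - A" using assms(2) by blast
  hence "openin (tauA A) (tilde_ball p 1)" "tilde_ball p 1 \<inter> Ln = {p}"
    using openin_tilde_ball[OF assms(1)] tilde_ball_Int_Ln[of p 1] by simp_all
  thus "\<exists>T. openin (subtopology (tauA A) Ln) T \<and> p \<in> T \<and> T \<subseteq> W"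
    using \<open>p \<in> W\<close> unfolding openin_subtopology by blast
qed

lemma continuous_map_subtopology_Ln_tauA:
  fixes f :: "(real^'m) \<times> real \<Rightarrow> real"
  assumes A: "A \<subseteq> Ln" and f: "\<And>a. a \<in> A \<Longrightarrow> continuous (at a within Ln) f"
  shows "continuous_map (subtopology (tauA A) Ln) euclideanreal f"
  unfolding continuous_map_def topspace_subtopology_Ln_tauA[OF A]
proof (intro conjI allI impI)
  fix U :: "real set" assume "openin euclideanreal U"
  show "openin (subtopology (tauA A) Ln) {x \<in> Ln. f x \<in> U}"
    unfolding openin_subopen[of _ "{x \<in> Ln. f x \<in> U}"]
  proof
    fix a assume a: "a \<in> {x \<in> Ln. f x \<in> U}"
    show "\<exists>T. openin (subtopology (tauA A) Ln) T \<and> a \<in> T \<and> T \<subseteq> {x \<in> Ln. f x \<in> U}"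
    proof (cases "a \<in> A")
      case True
      obtain e where "0 < e" "ball (f a) e \<subseteq> U"
        using a \<open>openin euclideanreal U\<close> open_contains_ball[of U] by auto
      then obtain d where "0 < d" "f ` (ball a d \<inter> Ln) \<subseteq> U"
        using f[OF True] unfolding continuous_within_ball by (meson subset_trans)
      moreover have "openin (subtopology (tauA A) Ln) (ball a d \<inter> Xn \<inter> Ln)"
        using openin_tauA_open_Int[OF A open_ball] unfolding openin_subtopology by blast
      moreover have "a \<in> ball a d \<inter> Xn \<inter> Ln" using a \<open>0 < d\<close> by (simp add: Xn_def)
      ultimately show ?thesis by (intro exI[of _ "ball a d \<inter> Xn \<inter> Ln"]) auto
    next
      case False
      hence "openin (subtopology (tauA A) Ln) {a}"
        using a by (intro openin_subtopology_Ln_tauA[OF A]) auto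
      thus ?thesis using a by blast
    qed
  qed
qed simp

lemma lepoll_nat_fun_reals: "(UNIV :: (nat \<Rightarrow> real) set) \<lesssim> (UNIV :: real set)"
proof -
  obtain b :: "nat set \<Rightarrow> real" where "bij b"
    using nat_sets_eqpoll_reals unfolding eqpoll_def by blast
  hence "inj (inv b)" by (simp add: bij_is_surj surj_imp_inj_inv)
  hence "inj (\<lambda>F :: nat \<Rightarrow> real. inv b \<circ> F)"
    by (intro injI) (simp add: fun_eq_iff inj_eq)
  hence "(UNIV :: (nat \<Rightarrow> real) set) \<lesssim> (UNIV :: (nat \<Rightarrow> nat set) set)"
    unfolding lepoll_def by blast
  also have "\<dots> \<lesssim> (UNIV :: nat set set)"
  proof -
    have "inj (\<lambda>F :: nat \<Rightarrow> nat set. {(i, j). j \<in> F i})"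
      by (intro injI) (auto simp: fun_eq_iff set_eq_iff)
    hence "inj (\<lambda>F :: nat \<Rightarrow> nat set. prod_encode ` {(i, j). j \<in> F i})"
      using inj_prod_encode[of UNIV] by (simp add: inj_def inj_image_eq_iff)
    thus ?thesis unfolding lepoll_def by blast
  qed
  also have "\<dots> \<lesssim> (UNIV :: real set)" by (rule eqpoll_imp_lepoll[OF nat_sets_eqpoll_reals])
  finally show ?thesis .
qed

lemma zero_sets_lepoll_reals:
  assumes "separable_space X" shows "Collect (zero_set_of X) \<lesssim> (UNIV :: real set)"
proof -
  obtain C where C: "countable C" "X closure_of C = topspace X"
    using assms unfolding separable_space_def by blast
  define fn where
    "fn Z = (SOME f. continuous_map X euclideanreal f \<and> Z = {x \<in> topspace X. f x = 0})" for Z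
  have fn: "continuous_map X euclideanreal (fn Z)" "Z = {x \<in> topspace X. fn Z x = 0}"
    if "zero_set_of X Z" for Z
    using someI_ex[OF that[unfolded zero_set_of_def]] unfolding fn_def by blast+
  have "inj_on (\<lambda>Z i. fn Z (from_nat_into C i)) (Collect (zero_set_of X))"
  proof (rule inj_onI)
    fix Z Z' assume Z: "Z \<in> Collect (zero_set_of X)" and Z': "Z' \<in> Collect (zero_set_of X)"
      and eq: "(\<lambda>i. fn Z (from_nat_into C i)) = (\<lambda>i. fn Z' (from_nat_into C i))"
    have "fn Z c = fn Z' c" if "c \<in> C" for c
      using fun_cong[OF eq, of "to_nat_on C c"] C(1) that by simp
    hence "fn Z x = fn Z' x" if "x \<in> topspace X" for x
      using forall_in_closure_of_eq[of x X C euclideanreal "fn Z" "fn Z'"] fn[of Z] fn[of Z']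
        Z Z' C(2) that
      by simp
    hence "{x \<in> topspace X. fn Z x = 0} = {x \<in> topspace X. fn Z' x = 0}" by auto
    thus "Z = Z'" using fn(2)[of Z] fn(2)[of Z'] Z Z' by simp
  qed
  hence "Collect (zero_set_of X) \<lesssim> (UNIV :: (nat \<Rightarrow> real) set)" unfolding lepoll_def by blast
  thus ?thesis using lepoll_nat_fun_reals by (rule lepoll_trans)
qed

lemma not_z_embedded_if_continuum_zero_sets:
  assumes X: "separable_space X" and "T \<subseteq> Y" and T: "(UNIV :: real set) \<lesssim> T"
    and zero: "\<And>S. S \<subseteq> T \<Longrightarrow> zero_set_of (subtopology X Y) S"
  shows "\<not> z_embedded Y X"
proof
  assume z: "z_embedded Y X"
  have "S \<in> (\<lambda>Z. Z \<inter> T) ` Collect (zero_set_of X)" if S: "S \<subseteq> T" for S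
  proof -
    obtain Z where "zero_set_of X Z" "S = Z \<inter> Y"
      using z zero[OF S] unfolding z_embedded_def by blast
    hence "zero_set_of X Z" "S = Z \<inter> T" using S \<open>T \<subseteq> Y\<close> by auto
    thus ?thesis by blast
  qed
  hence "Pow T \<lesssim> Collect (zero_set_of X)" unfolding lepoll_iff by blast
  also have "\<dots> \<lesssim> (UNIV :: real set)" by (rule zero_sets_lepoll_reals[OF X])
  also have "\<dots> \<lesssim> T" by (rule T)
  finally show False
    using lesspoll_Pow_self[of T] lepoll_antisym unfolding lesspoll_def by blast
qed

lemma reals_lepoll_closed_uncountable:
  fixes B :: "'a::polish_space set"
  assumes "closed B" "uncountable B"
  shows "(UNIV :: real set) \<lesssim> B"
proof -
  define \<F> where "\<F> = {U. open U \<and> countable (U \<inter> B)}"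
  define P where "P = B - \<Union>\<F>" \<comment> \<open>the condensation points of B\<close>
  obtain \<F>' where "\<F>' \<subseteq> \<F>" "countable \<F>'" "\<Union>\<F>' = \<Union>\<F>"
    using Lindelof[of \<F>] unfolding \<F>_def by blast
  hence "countable (\<Union>U\<in>\<F>'. U \<inter> B)" by (intro countable_UN) (auto simp: \<F>_def)
  moreover have "B - P = (\<Union>U\<in>\<F>'. U \<inter> B)" using \<open>\<Union>\<F>' = \<Union>\<F>\<close> unfolding P_def by blast
  ultimately have countable: "countable (B - P)" by simp
  have "closed P" unfolding P_def \<F>_def by (intro closed_Diff assms(1) open_Union) blast
  have "P \<noteq> {}" using countable assms(2) by auto
  have "P \<subseteq> euclidean derived_set_of P"
  proof
    fix x assume "x \<in> P"
    have "\<exists>y. y \<noteq> x \<and> y \<in> P \<and> y \<in> T" if "x \<in> T" "open T" for T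
    proof -
      have "uncountable (T \<inter> B)" using \<open>x \<in> P\<close> that unfolding P_def \<F>_def by blast
      moreover have "T \<inter> B \<subseteq> insert x (T \<inter> P - {x}) \<union> (B - P)" by blast
      ultimately have "uncountable (T \<inter> P - {x})"
        using countable countable_subset by (metis countable_Un countable_insert)
      then obtain y where "y \<in> T \<inter> P - {x}" by (metis countable_empty ex_in_conv)
      thus ?thesis by blast
    qed
    thus "x \<in> euclidean derived_set_of P" unfolding in_derived_set_of by simp
  qed
  moreover have "euclidean derived_set_of P \<subseteq> P"
    using \<open>closed P\<close> closedin_contains_derived_set[of euclidean P] by simp
  ultimately have "euclidean derived_set_of P = P" by (rule subset_antisym[rotated])
  hence "(UNIV :: real set) \<lesssim> P"
    using lepoll_perfect_set[OF disjI1[OF completely_metrizable_space_euclidean]] \<open>P \<noteq> {}\<close>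
    by blast
  also have "P \<lesssim> B" unfolding P_def by (rule subset_imp_lepoll) blast
  finally show ?thesis .
qed

lemma zero_set_of_discrete_topology: "S \<subseteq> U \<Longrightarrow> zero_set_of (discrete_topology U) S"
  unfolding zero_set_of_def
  by (intro exI[of _ "\<lambda>x. if x \<in> S then 0 else 1"]) (auto simp: subset_eq)

lemma subtopology_tauA_eq_discrete_topology:
  assumes A: "A \<subseteq> Ln" and B: "B \<subseteq> Ln - A"
  shows "subtopology (tauA A) B = discrete_topology B"
proof -
  have "topspace (subtopology (tauA A) B) = B"
    using topspace_tauA[OF A] B by (auto simp: topspace_subtopology Xn_def)
  moreover have "openin (subtopology (tauA A) B) {x}" if "x \<in> B" for x
  proof -
    have "openin (subtopology (tauA A) Ln) {x}"
      using B that by (intro openin_subtopology_Ln_tauA[OF A]) auto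
    then obtain U where "openin (tauA A) U" "{x} = U \<inter> Ln" unfolding openin_subtopology by blast
    hence "openin (tauA A) U" "{x} = U \<inter> B" using B that by auto
    thus ?thesis unfolding openin_subtopology by blast
  qed
  ultimately have "discrete_topology B = subtopology (tauA A) B"
    unfolding discrete_topology_unique by blast
  thus ?thesis by simp
qed

lemma zero_set_of_subtopology_Ln_tauA:
  assumes A: "A \<subseteq> Ln" and S: "S \<subseteq> Ln" "closure S \<inter> A = {}"
  shows "zero_set_of (subtopology (tauA A) Ln) S"
proof -
  define f where "f x = (if x \<in> S then 0 else 1 :: real)" for x
  have "continuous (at a within Ln) f" if "a \<in> A" for a
  proof -
    have "a \<in> - closure S" using S(2) that by blast
    then obtain d where "0 < d" "ball a d \<subseteq> - closure S"
      using open_contains_ball[of "- closure S"] by auto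
    hence near: "1 = f x" if "dist x a < d" for x
      using that closure_subset[of S] by (auto simp: f_def dist_commute)
    have "a \<in> Ln" using A \<open>a \<in> A\<close> by blast
    show ?thesis
      by (rule continuous_transform_within[where f="\<lambda>_. 1" and \<delta>=d])
        (use \<open>0 < d\<close> \<open>a \<in> Ln\<close> near in auto)
  qed
  hence "continuous_map (subtopology (tauA A) Ln) euclideanreal f"
    by (rule continuous_map_subtopology_Ln_tauA[OF A])
  moreover have "S = {x \<in> topspace (subtopology (tauA A) Ln). f x = 0}"
    using S(1) unfolding topspace_subtopology_Ln_tauA[OF A] f_def by auto
  ultimately show ?thesis unfolding zero_set_of_def by blast
qed

lemma closed_Ln: "closed Ln"
  unfolding Ln_def
  by (intro closed_Collect_eq continuous_on_snd continuous_on_id continuous_on_const)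

theorem mainTheorem9:
  fixes A :: "((real^'m) \<times> real) set"
  assumes "A \<subseteq> Ln"
  shows "(\<forall>B. B \<subseteq> Ln - A \<and> B \<approx> (UNIV :: real set) \<longrightarrow> \<not> z_embedded B (tauA A)) \<and>
         (\<forall>B. B \<subseteq> Ln - A \<and> closedin (subtopology euclidean Ln) B \<and> uncountable B
              \<longrightarrow> \<not> z_embedded Ln (tauA A))"
proof (intro conjI allI impI; elim conjE)
  fix B :: "((real^'m) \<times> real) set"
  assume B: "B \<subseteq> Ln - A" and "B \<approx> (UNIV :: real set)"
  hence "(UNIV :: real set) \<lesssim> B" by (simp add: eqpoll_imp_lepoll eqpoll_sym)
  thus "\<not> z_embedded B (tauA A)"
    using separable_space_tauA[OF assms] zero_set_of_discrete_topology
      subtopology_tauA_eq_discrete_topology[OF assms B]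
    by (intro not_z_embedded_if_continuum_zero_sets[of _ B]) auto
next
  fix B :: "((real^'m) \<times> real) set"
  assume B: "B \<subseteq> Ln - A" and "closedin (subtopology euclidean Ln) B" "uncountable B"
  hence "closed B" using closedin_closed_trans closed_Ln by blast
  have "(UNIV :: real set) \<lesssim> B"
    using reals_lepoll_closed_uncountable[OF \<open>closed B\<close> \<open>uncountable B\<close>] .
  moreover have "zero_set_of (subtopology (tauA A) Ln) S" if "S \<subseteq> B" for S
    using B that closure_minimal[OF that \<open>closed B\<close>]
    by (intro zero_set_of_subtopology_Ln_tauA[OF assms]) auto
  ultimately show "\<not> z_embedded Ln (tauA A)"
    using separable_space_tauA[OF assms] B
    by (intro not_z_embedded_if_continuum_zero_sets[of _ B]) auto
qed

end
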